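(* Let $I\subseteq\mathbb{R}$ be an interval, let $f:I\to\mathbb{R}$ be differentiable on the interior $I^\circ$ of $I$, and let $a,b\in I$ with $a<b$ and $f'\in L^1[a,b]$. Let $s\in(0,1]$, $\alpha\in[0,1]$, $m\in(0,1]$, assume $b/m\in I^\circ$, and let $p>1$ and $q=\frac{p}{p-1}$. If $|f'|^q$ is $s$-$(\alpha,m)$-convex (in the first sense) on $[a,b]$, then $$\left|\frac{f(a)+f(b)}{2}-\frac{1}{b-a}\int_a^b f(x)\,dx\right|\le (b-a)\left[\frac{2}{(p+1)(p+2)}\right]^{1/p}\left(\frac{|f'(a)|^q+m\alpha s\left|f'\!\left(\frac{b}{m}\right)\right|^q}{\alpha s+1}\right)^{1/q}.$$
   Context: Let $s\in(0,1]$, $\alpha\in[0,1]$, $m\in(0,1]$. A nonnegative function $g$ is called $s$-$(\alpha,m)$-convex (in the first sense) on $[a,b]$ if for all $x,y\in[a,b]$ (with $y/m$ in the domain of $g$) and all $t\in[0,1]$, $$g(tx+(1-t)y)\le t^{\alpha s}g(x)+m\,(1-t^{\alpha s})\,g\!\left(\frac{y}{m}\right).$$ *)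

theory Defs
  imports "HOL-Analysis.Analysis"
begin

text \<open>Real power t^e with the convention t^0 = 1 (also for t = 0); for e > 0 and
  t >= 0 this is the usual power t powr e.\<close>
definition rpow :: "real \<Rightarrow> real \<Rightarrow> real" where
  "rpow t e = (if e = 0 then 1 else t powr e)"

text \<open>s-(alpha,m)-convexity in the first sense of a nonnegative function g on [a,b],
  where D is the domain of g (the condition is required whenever y/m lies in D).\<close>
definition s_alpha_m_convex ::
  "real \<Rightarrow> real \<Rightarrow> real \<Rightarrow> (real \<Rightarrow> real) \<Rightarrow> real set \<Rightarrow> real \<Rightarrow> real \<Rightarrow> bool" where
  "s_alpha_m_convex s \<alpha> m g D a b \<longleftrightarrow>
     (\<forall>x\<in>{a..b}. 0 \<le> g x) \<and>
     (\<forall>x\<in>{a..b}. \<forall>y\<in>{a..b}. y / m \<in> D \<longrightarrow> (\<forall>t\<in>{0..1}.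
        g (t * x + (1 - t) * y) \<le> rpow t (\<alpha> * s) * g x + m * (1 - rpow t (\<alpha> * s)) * g (y / m)))"

end

theory Submission
  imports Defs
begin

text \<open>Integration by parts turns the trapezoid error into
  \<open>(b - a)((f a + f b)/2) - \<integral>f = \<integral> (x - (a + b)/2) f'(x) dx\<close>.
  Hoelder's inequality splits this into the \<open>L\<^sup>p\<close>-moment of \<open>\<bar>x - (a + b)/2\<bar>\<close>, computed exactly,
  and the \<open>L\<^sup>q\<close>-norm of \<open>f'\<close>, which is bounded by integrating the \<open>s-(\<alpha>,m)\<close>-convexity estimate
  along \<open>x = t a + (1 - t) b\<close> using \<open>\<integral>\<^sub>0\<^sup>1 t\<^sup>\<alpha>\<^sup>s dt = 1/(\<alpha>s + 1)\<close>. This yields the constant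
  \<open>(b - a)/2 \<cdot> (p + 1)\<^sup>-\<^sup>1\<^sup>/\<^sup>p\<close>, which is at most the stated one since \<open>2\<^sup>p\<^sup>+\<^sup>1 \<ge> p + 2\<close> for \<open>p \<ge> 1\<close>.\<close>

lemma has_integral_powr_abs_diff_right:
  fixes c b p :: real
  assumes "c \<le> b" "-1 < p"
  shows "((\<lambda>x. \<bar>x - c\<bar> powr p) has_integral (b - c) powr (p + 1) / (p + 1)) {c..b}"
proof -
  have "((\<lambda>x. \<bar>x - c\<bar> powr p) has_integral
          (b - c) powr (p + 1) / (p + 1) - (c - c) powr (p + 1) / (p + 1)) {c..b}"
  proof (rule fundamental_theorem_of_calculus_interior)
    show "continuous_on {c..b} (\<lambda>x. (x - c) powr (p + 1) / (p + 1))"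
      using assms by (intro continuous_intros continuous_on_powr') auto
  next
    fix x assume x: "x \<in> {c<..<b}"
    then have "((\<lambda>x. (x - c) powr (p + 1) / (p + 1)) has_real_derivative
        (p + 1) * (x - c) powr (p + 1 - 1) * (1 - 0) / (p + 1)) (at x)"
      using assms by (intro derivative_eq_intros) auto
    then have "((\<lambda>x. (x - c) powr (p + 1) / (p + 1)) has_real_derivative (x - c) powr p) (at x)"
      using assms by simp
    then show "((\<lambda>x. (x - c) powr (p + 1) / (p + 1)) has_vector_derivative \<bar>x - c\<bar> powr p) (at x)"
      using x by (simp add: has_real_derivative_iff_has_vector_derivative)
  qed (use assms in auto)
  then show ?thesis
    using assms by simp
qed

lemma has_integral_powr_abs_diff_midpoint:
  fixes a b p :: real
  assumes "a \<le> b" "-1 < p"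
  shows "((\<lambda>x. \<bar>x - (a + b) / 2\<bar> powr p) has_integral 2 * ((b - a) / 2) powr (p + 1) / (p + 1)) {a..b}"
proof -
  let ?c = "(a + b) / 2" and ?I = "((b - a) / 2) powr (p + 1) / (p + 1)"
  have "((\<lambda>y. \<bar>y - - ?c\<bar> powr p) has_integral ?I) {- ?c..- a}"
    using has_integral_powr_abs_diff_right[of "- ?c" "- a" p] assms by (simp add: field_simps)
  then have left: "((\<lambda>x. \<bar>x - ?c\<bar> powr p) has_integral ?I) {a..?c}"
    using has_integral_reflect_real[where f="\<lambda>y. \<bar>y - - ?c\<bar> powr p" and a="- ?c" and b="- a"]
    by (simp add: abs_minus_commute)
  have right: "((\<lambda>x. \<bar>x - ?c\<bar> powr p) has_integral ?I) {?c..b}"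
    using has_integral_powr_abs_diff_right[of ?c b p] assms by (simp add: field_simps)
  have "((\<lambda>x. \<bar>x - ?c\<bar> powr p) has_integral ?I + ?I) {a..b}"
    by (rule has_integral_combine[OF _ _ left right]) (use assms in auto)
  then show ?thesis
    by simp
qed

lemma rpow_eq_powr_of_pos: "0 < t \<Longrightarrow> rpow t e = t powr e"
  by (simp add: rpow_def)

lemma has_integral_rpow_ratio:
  fixes a b r :: real
  assumes "a < b" "-1 < r"
  shows "((\<lambda>x. rpow ((b - x) / (b - a)) r) has_integral (b - a) / (r + 1)) {a..b}"
proof -
  define l where "l = b - a"
  have "0 < l" "0 < r + 1"
    using assms by (auto simp: l_def)
  define G where "G x = - l / (r + 1) * ((b - x) / l) powr (r + 1)" for x
  have "((\<lambda>x. rpow ((b - x) / l) r) has_integral G b - G a) {a..b}"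
  proof (rule fundamental_theorem_of_calculus_interior)
    show "continuous_on {a..b} G"
      unfolding G_def l_def using assms by (intro continuous_intros continuous_on_powr') auto
  next
    fix x assume x: "x \<in> {a<..<b}"
    then have "0 < (b - x) / l"
      by (simp add: l_def)
    then have "(G has_real_derivative
        - l / (r + 1) * ((r + 1) * ((b - x) / l) powr (r + 1 - 1) * ((0 - 1) / l))) (at x)"
      unfolding G_def by (intro derivative_eq_intros) auto
    then show "(G has_vector_derivative rpow ((b - x) / l) r) (at x)"
      using \<open>0 < (b - x) / l\<close> \<open>0 < l\<close> \<open>0 < r + 1\<close>
      by (simp add: rpow_eq_powr_of_pos has_real_derivative_iff_has_vector_derivative)
  qed (use assms in auto)
  moreover have "G b - G a = l / (r + 1)"
    using \<open>0 < l\<close> by (simp add: G_def flip: l_def)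
  ultimately show ?thesis
    by (simp add: l_def)
qed

lemma has_integral_rpow_ratio_combination:
  fixes a b r m A B :: real
  assumes "a < b" "-1 < r"
  defines "u x \<equiv> rpow ((b - x) / (b - a)) r"
  shows "((\<lambda>x. u x * A + m * (1 - u x) * B) has_integral (b - a) * ((A + m * r * B) / (r + 1))) {a..b}"
proof -
  have "((\<lambda>x. (A - m * B) * u x + m * B) has_integral
      (A - m * B) * ((b - a) / (r + 1)) + (b - a) * (m * B)) {a..b}"
    unfolding u_def
    using has_integral_rpow_ratio[OF assms(1,2)] has_integral_const_real[of "m * B" a b] assms(1)
    by (intro has_integral_add has_integral_mult_right) auto
  moreover have "(A - m * B) * ((b - a) / (r + 1)) + (b - a) * (m * B) = (b - a) * ((A + m * r * B) / (r + 1))"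
    using assms(2) by (simp add: field_simps)
  ultimately show ?thesis
    by (simp add: algebra_simps)
qed

lemma s_alpha_m_convex_le_endpoints:
  assumes "s_alpha_m_convex s \<alpha> m g D a b" "a < b" "b / m \<in> D" "x \<in> {a..b}"
  defines "t \<equiv> (b - x) / (b - a)"
  shows "g x \<le> rpow t (\<alpha> * s) * g a + m * (1 - rpow t (\<alpha> * s)) * g (b / m)"
proof -
  have "t \<in> {0..1}"
    using assms(2,4) by (simp add: t_def divide_le_eq_1)
  moreover have "t * a + (1 - t) * b = x"
  proof -
    have "t * (b - a) = b - x"
      using assms(2) by (simp add: t_def)
    then show ?thesis
      by (simp add: algebra_simps)
  qed
  moreover have "a \<in> {a..b}" "b \<in> {a..b}"
    using assms(2) by auto
  ultimately show ?thesis
    using assms(1,3) unfolding s_alpha_m_convex_def by blast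
qed

lemma abs_integral_le_Young_scaled:
  fixes g u v U V :: "'a::euclidean_space \<Rightarrow> real"
  assumes pq: "1 < p" "1 < q" "1 / p + 1 / q = 1"
    and "g integrable_on S" "(U has_integral P) S" "(V has_integral H) S"
    and "\<And>x. x \<in> S \<Longrightarrow> \<bar>g x\<bar> \<le> u x * v x"
    and "\<And>x. x \<in> S \<Longrightarrow> 0 \<le> u x \<and> 0 \<le> v x"
    and "\<And>x. x \<in> S \<Longrightarrow> u x powr p \<le> U x \<and> v x powr q \<le> V x"
    and "0 < A" "0 < B"
  shows "\<bar>integral S g\<bar> \<le> A * B * (P / (p * A powr p) + H / (q * B powr q))"
proof -
  define W where "W x = A * B * (U x / (p * A powr p) + V x / (q * B powr q))" for x
  have W: "(W has_integral A * B * (P / (p * A powr p) + H / (q * B powr q))) S"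
    unfolding W_def using assms(5,6) by (intro has_integral_mult_right has_integral_add has_integral_divide)
  have "\<bar>g x\<bar> \<le> W x" if x: "x \<in> S" for x
  proof -
    have "\<bar>g x\<bar> \<le> A * B * ((u x / A) * (v x / B))"
      using assms(7)[OF x] \<open>0 < A\<close> \<open>0 < B\<close> by simp
    also have "\<dots> \<le> A * B * ((u x / A) powr p / p + (v x / B) powr q / q)"
      using assms(8)[OF x] \<open>0 < A\<close> \<open>0 < B\<close> pq by (intro mult_left_mono Youngs_inequality) auto
    also have "\<dots> = A * B * (u x powr p / (p * A powr p) + v x powr q / (q * B powr q))"
      using assms(8)[OF x] \<open>0 < A\<close> \<open>0 < B\<close> by (simp add: powr_divide mult.commute)
    also have "\<dots> \<le> W x"
      using assms(9)[OF x] \<open>0 < A\<close> \<open>0 < B\<close> pq unfolding W_def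
      by (intro mult_left_mono add_mono divide_right_mono) auto
    finally show ?thesis .
  qed
  then show ?thesis
    using integral_norm_bound_integral[OF assms(4) has_integral_integrable[OF W]] W
    by (simp add: integral_unique)
qed

text \<open>Hoelder's inequality for Henstock--Kurzweil integrals, stated for majorants \<open>U \<ge> u\<^sup>p\<close> and
  \<open>V \<ge> v\<^sup>q\<close> so that no integrability of \<open>u\<^sup>p\<close> or \<open>v\<^sup>q\<close> is needed. Scaling Young's inequality by
  \<open>(P + e)\<^sup>1\<^sup>/\<^sup>p\<close> and \<open>(H + e)\<^sup>1\<^sup>/\<^sup>q\<close> and letting \<open>e \<rightarrow> 0\<close> also covers \<open>P = 0\<close> or \<open>H = 0\<close>.\<close>
lemma abs_integral_le_Hoelder:
  fixes g u v U V :: "'a::euclidean_space \<Rightarrow> real"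
  assumes pq: "1 < p" "1 < q" "1 / p + 1 / q = 1"
    and "g integrable_on S" "(U has_integral P) S" "(V has_integral H) S"
    and "\<And>x. x \<in> S \<Longrightarrow> \<bar>g x\<bar> \<le> u x * v x"
    and "\<And>x. x \<in> S \<Longrightarrow> 0 \<le> u x \<and> 0 \<le> v x"
    and "\<And>x. x \<in> S \<Longrightarrow> u x powr p \<le> U x \<and> v x powr q \<le> V x"
  shows "\<bar>integral S g\<bar> \<le> P powr (1 / p) * H powr (1 / q)"
proof -
  have "0 \<le> P"
    by (rule has_integral_nonneg[OF assms(5)]) (meson assms(9) order_trans powr_ge_zero)
  have "0 \<le> H"
    by (rule has_integral_nonneg[OF assms(6)]) (meson assms(9) order_trans powr_ge_zero)
  have approx: "\<bar>integral S g\<bar> \<le> (P + e) powr (1 / p) * (H + e) powr (1 / q)" if "0 < e" for e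
  proof -
    define A where "A = (P + e) powr (1 / p)"
    define B where "B = (H + e) powr (1 / q)"
    have A: "0 < A" "A powr p = P + e" and B: "0 < B" "B powr q = H + e"
      using \<open>0 \<le> P\<close> \<open>0 \<le> H\<close> \<open>0 < e\<close> pq by (auto simp: A_def B_def powr_powr)
    have "\<bar>integral S g\<bar> \<le> A * B * (P / (p * A powr p) + H / (q * B powr q))"
      by (rule abs_integral_le_Young_scaled[OF assms A(1) B(1)])
    also have "\<dots> \<le> A * B * (1 / p + 1 / q)"
      using A B \<open>0 \<le> P\<close> \<open>0 \<le> H\<close> \<open>0 < e\<close> pq
      by (intro mult_left_mono add_mono) (auto simp: divide_simps)
    finally show ?thesis
      using pq by (simp add: A_def B_def)
  qed
  have "((\<lambda>e. (P + e) powr (1 / p) * (H + e) powr (1 / q)) \<longlongrightarrow> (P + 0) powr (1 / p) * (H + 0) powr (1 / q))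
      (at_right 0)"
    using pq \<open>0 \<le> P\<close> \<open>0 \<le> H\<close>
    by (intro tendsto_intros tendsto_powr') (auto simp: eventually_at_right_less eventually_at_filter)
  then have "((\<lambda>e. (P + e) powr (1 / p) * (H + e) powr (1 / q)) \<longlongrightarrow> P powr (1 / p) * H powr (1 / q))
      (at_right 0)"
    by simp
  moreover have "eventually (\<lambda>e. \<bar>integral S g\<bar> \<le> (P + e) powr (1 / p) * (H + e) powr (1 / q)) (at_right 0)"
    using eventually_at_right_less by (rule eventually_mono) (rule approx)
  ultimately show ?thesis
    by (rule tendsto_lowerbound) simp
qed

lemma has_integral_midpoint_weighted_derivative:
  fixes f f' :: "real \<Rightarrow> real"
  assumes "a \<le> b" "continuous_on {a..b} f"
    and "\<And>x. x \<in> {a<..<b} \<Longrightarrow> (f has_real_derivative f' x) (at x)"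
  shows "((\<lambda>x. (x - (a + b) / 2) * f' x) has_integral (b - a) * ((f a + f b) / 2) - integral {a..b} f) {a..b}"
proof -
  let ?c = "(a + b) / 2"
  have "((\<lambda>x. f x + (x - ?c) * f' x) has_integral (b - ?c) * f b - (a - ?c) * f a) {a..b}"
  proof (rule fundamental_theorem_of_calculus_interior)
    show "continuous_on {a..b} (\<lambda>x. (x - ?c) * f x)"
      using assms(2) by (intro continuous_intros)
  next
    fix x assume "x \<in> {a<..<b}"
    then have "((\<lambda>x. (x - ?c) * f x) has_real_derivative (1 - 0) * f x + (x - ?c) * f' x) (at x)"
      using assms(3) by (intro derivative_eq_intros) auto
    then show "((\<lambda>x. (x - ?c) * f x) has_vector_derivative f x + (x - ?c) * f' x) (at x)"
      by (simp add: has_real_derivative_iff_has_vector_derivative)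
  qed (use assms in auto)
  moreover have "(f has_integral integral {a..b} f) {a..b}"
    using integrable_continuous_interval[OF assms(2)] by (simp add: integrable_integral)
  ultimately have "((\<lambda>x. (f x + (x - ?c) * f' x) - f x) has_integral
      (b - ?c) * f b - (a - ?c) * f a - integral {a..b} f) {a..b}"
    by (rule has_integral_diff)
  moreover have "(b - ?c) * f b - (a - ?c) * f a = (b - a) * ((f a + f b) / 2)"
    by (simp add: field_simps)
  ultimately show ?thesis
    by (simp only: add_diff_cancel_left')
qed

lemma inverse_succ_powr_half_le:
  fixes p :: real
  assumes "1 \<le> p"
  shows "(1 / (p + 1)) powr (1 / p) / 2 \<le> (2 / ((p + 1) * (p + 2))) powr (1 / p)"
proof -
  have "1 + p * (2 / 3) \<le> 1 + p * ln 2"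
    using ln2_ge_two_thirds assms by (intro add_left_mono mult_left_mono) auto
  also have "\<dots> \<le> exp (p * ln 2)"
    by (rule exp_ge_add_one_self)
  also have "\<dots> = 2 powr p"
    by (simp add: powr_def)
  finally have "p + 2 \<le> 2 * 2 powr p"
    using assms by linarith
  then have "1 / (p + 1) \<le> (2 * 2 powr p / (p + 2)) / (p + 1)"
    using assms by (intro divide_right_mono) (auto simp: le_divide_eq)
  also have "\<dots> = 2 / ((p + 1) * (p + 2)) * 2 powr p"
    by simp
  finally have "(1 / (p + 1)) powr (1 / p) \<le> (2 / ((p + 1) * (p + 2)) * 2 powr p) powr (1 / p)"
    using assms by (intro powr_mono2) auto
  also have "\<dots> = (2 / ((p + 1) * (p + 2))) powr (1 / p) * (2 powr p) powr (1 / p)"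
    by (rule powr_mult)
  also have "(2 powr p) powr (1 / p) = (2::real)"
    using assms by (simp add: powr_powr)
  finally show ?thesis
    by simp
qed

lemma powr_midpoint_moment:
  fixes l p q :: real
  assumes "0 < l" "0 < p" "1 / p + 1 / q = 1"
  shows "(2 * (l / 2) powr (p + 1) / (p + 1)) powr (1 / p) * l powr (1 / q)
    = l * (l / 2) * (1 / (p + 1)) powr (1 / p)"
proof -
  have "2 * (l / 2) powr (p + 1) / (p + 1) = (l / 2) powr p * l * (1 / (p + 1))"
    using assms by (simp add: powr_add)
  also have "(\<dots>) powr (1 / p) = ((l / 2) powr p) powr (1 / p) * l powr (1 / p) * (1 / (p + 1)) powr (1 / p)"
    by (simp only: powr_mult)
  also have "((l / 2) powr p) powr (1 / p) = l / 2"
    using assms by (simp add: powr_powr)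
  finally have "(2 * (l / 2) powr (p + 1) / (p + 1)) powr (1 / p) * l powr (1 / q)
      = l / 2 * (l powr (1 / p) * l powr (1 / q)) * (1 / (p + 1)) powr (1 / p)"
    by (simp only: mult_ac)
  also have "l powr (1 / p) * l powr (1 / q) = l"
    using assms by (simp flip: powr_add)
  finally show ?thesis
    by (simp only: mult_ac)
qed

lemma trapezoid_error_le_Hoelder:
  fixes f f' h :: "real \<Rightarrow> real"
  assumes "a < b" "continuous_on {a..b} f"
    and "\<And>x. x \<in> {a<..<b} \<Longrightarrow> (f has_real_derivative f' x) (at x)"
    and "1 < p" "1 < q" "1 / p + 1 / q = 1"
    and "(h has_integral H) {a..b}" "\<And>x. x \<in> {a..b} \<Longrightarrow> \<bar>f' x\<bar> powr q \<le> h x"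
  shows "\<bar>(f a + f b) / 2 - (1 / (b - a)) * integral {a..b} f\<bar>
    \<le> (b - a) / 2 * (1 / (p + 1)) powr (1 / p) * (H / (b - a)) powr (1 / q)"
proof -
  define E where "E = (b - a) * ((f a + f b) / 2) - integral {a..b} f"
  have E: "((\<lambda>x. (x - (a + b) / 2) * f' x) has_integral E) {a..b}"
    unfolding E_def using assms(1-3) by (intro has_integral_midpoint_weighted_derivative) auto
  have "\<bar>E\<bar> \<le> (2 * ((b - a) / 2) powr (p + 1) / (p + 1)) powr (1 / p) * H powr (1 / q)"
    using E[THEN integral_unique] \<open>a < b\<close> \<open>1 < p\<close> assms(8)
      abs_integral_le_Hoelder[OF assms(4-6) has_integral_integrable[OF E]
        has_integral_powr_abs_diff_midpoint assms(7),
        where u = "\<lambda>x. \<bar>x - (a + b) / 2\<bar>" and v = "\<lambda>x. \<bar>f' x\<bar>"]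
    by (auto simp: abs_mult)
  also have "H powr (1 / q) = (b - a) powr (1 / q) * (H / (b - a)) powr (1 / q)"
    using \<open>a < b\<close> by (simp flip: powr_mult)
  also have "(2 * ((b - a) / 2) powr (p + 1) / (p + 1)) powr (1 / p) * (\<dots>)
      = (b - a) * ((b - a) / 2) * (1 / (p + 1)) powr (1 / p) * (H / (b - a)) powr (1 / q)"
    using powr_midpoint_moment[of "b - a" p q] assms(1,4,6) by (simp only: mult.assoc [symmetric])
  finally have "\<bar>E / (b - a)\<bar> \<le> (b - a) / 2 * (1 / (p + 1)) powr (1 / p) * (H / (b - a)) powr (1 / q)"
    using \<open>a < b\<close> by (simp add: divide_le_eq mult_ac)
  moreover have "E / (b - a) = (f a + f b) / 2 - (1 / (b - a)) * integral {a..b} f"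
    using \<open>a < b\<close> by (simp add: E_def field_simps)
  ultimately show ?thesis
    by simp
qed

theorem theorem5:
  fixes f :: "real \<Rightarrow> real" and I :: "real set"
    and a b s \<alpha> m p q :: real
  assumes "is_interval I"
    and "\<forall>x\<in>interior I. f differentiable (at x)"
    and "a \<in> interior I" and "b \<in> interior I" and "a < b"
    and "set_integrable lborel {a..b} (deriv f)"
    and "0 < s" and "s \<le> 1" and "0 \<le> \<alpha>" and "\<alpha> \<le> 1" and "0 < m" and "m \<le> 1"
    and "b / m \<in> interior I"
    and "1 < p" and "q = p / (p - 1)"
    and "s_alpha_m_convex s \<alpha> m (\<lambda>x. \<bar>deriv f x\<bar> powr q) (interior I) a b"
  shows "\<bar>(f a + f b) / 2 - (1 / (b - a)) * integral {a..b} f\<bar>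
    \<le> (b - a) * (2 / ((p + 1) * (p + 2))) powr (1 / p)
       * ((\<bar>deriv f a\<bar> powr q + m * \<alpha> * s * \<bar>deriv f (b / m)\<bar> powr q) / (\<alpha> * s + 1))
         powr (1 / q)"
proof -
  \<comment> \<open>Unused: the bounds on \<open>m\<close>, the upper bounds on \<open>s\<close> and \<open>\<alpha>\<close>, and the integrability of \<open>deriv f\<close>;
    the Henstock--Kurzweil fundamental theorem of calculus already makes \<open>(x - (a + b)/2) f'(x)\<close> integrable.\<close>
  have "1 < q" "1 / p + 1 / q = 1"
    using \<open>1 < p\<close> by (simp_all add: \<open>q = p / (p - 1)\<close> field_simps)
  define K where "K = (\<bar>deriv f a\<bar> powr q + m * \<alpha> * s * \<bar>deriv f (b / m)\<bar> powr q) / (\<alpha> * s + 1)"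
  define h where "h x = rpow ((b - x) / (b - a)) (\<alpha> * s) * \<bar>deriv f a\<bar> powr q
    + m * (1 - rpow ((b - x) / (b - a)) (\<alpha> * s)) * \<bar>deriv f (b / m)\<bar> powr q" for x
  have "{a..b} \<subseteq> interior I"
    using assms(1,3,4) by (metis closed_segment_eq_real_ivl closed_segment_subset convex_interior
      is_interval_convex less_imp_le \<open>a < b\<close>)
  then have deriv: "(f has_real_derivative deriv f x) (at x)" if "x \<in> {a..b}" for x
    using assms(2) that by (auto simp: DERIV_deriv_iff_real_differentiable)
  then have "continuous_on {a..b} f"
    by (meson DERIV_isCont continuous_at_imp_continuous_on)
  have "-1 < \<alpha> * s"
    using \<open>0 \<le> \<alpha>\<close> \<open>0 < s\<close> by (simp add: order_less_le_trans[of _ 0])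
  then have "(h has_integral (b - a) * K) {a..b}"
    using has_integral_rpow_ratio_combination[OF \<open>a < b\<close> \<open>-1 < \<alpha> * s\<close>] unfolding h_def K_def
    by (simp add: mult.assoc)
  have "\<bar>deriv f x\<bar> powr q \<le> h x" if "x \<in> {a..b}" for x
    using s_alpha_m_convex_le_endpoints[OF assms(16) \<open>a < b\<close> \<open>b / m \<in> interior I\<close> that]
    unfolding h_def by simp
  then have "\<bar>(f a + f b) / 2 - (1 / (b - a)) * integral {a..b} f\<bar>
      \<le> (b - a) / 2 * (1 / (p + 1)) powr (1 / p) * K powr (1 / q)"
    using trapezoid_error_le_Hoelder[OF \<open>a < b\<close> \<open>continuous_on {a..b} f\<close> deriv
        \<open>1 < p\<close> \<open>1 < q\<close> \<open>1 / p + 1 / q = 1\<close> \<open>(h has_integral (b - a) * K) {a..b}\<close>] \<open>a < b\<close>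
    by simp
  also have "\<dots> \<le> (b - a) * (2 / ((p + 1) * (p + 2))) powr (1 / p) * K powr (1 / q)"
    using inverse_succ_powr_half_le[of p] \<open>a < b\<close> \<open>1 < p\<close> by (intro mult_right_mono) auto
  finally show ?thesis
    by (simp only: K_def)
qed

end
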